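(* Let $A$ be a finite set with $|A|\ge 2$ and $n\ge 2$. If $X\subset\mathrm{Sym}(A^n)$ is a set of $n$ instructions which generates $\mathrm{Sym}(A^n)$, then $X$ contains no unary instruction.
   Context: Any $f\in\mathrm{Sym}(A^n)$ is written $f(x)=(f_1(x),\ldots,f_n(x))$ with coordinate functions $f_i:A^n\to A$; the $i$-th coordinate function is trivial if $f_i(x)=x_i$ for all $x$. An instruction is a permutation of $A^n$ with at most one nontrivial coordinate function (the identity counts as an instruction). A unary instruction is an instruction all of whose coordinate functions depend on at most one variable, i.e. it has the form $x\mapsto(x_1,\ldots,x_{j-1},h(x_j),x_{j+1},\ldots,x_n)$ with $h\in\mathrm{Sym}(A)$. *)

theory Defs
  imports "HOL-Algebra.Algebra"
begin

text \<open>A^n, with A = UNIV of a finite type, realised as lists of length n.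
  Coordinate i of x is x ! i (0-based).\<close>
definition words :: "nat \<Rightarrow> 'a list set" where
  "words n = {xs. length xs = n}"

text \<open>Sym(A^n) is BijGroup (words n); its carrier is Bij (words n).\<close>

definition instruction :: "nat \<Rightarrow> ('a list \<Rightarrow> 'a list) \<Rightarrow> bool" where
  "instruction n f \<longleftrightarrow> f \<in> Bij (words n) \<and>
     (\<exists>j<n. \<forall>i<n. i \<noteq> j \<longrightarrow> (\<forall>x\<in>words n. f x ! i = x ! i))"

definition unary_instruction :: "nat \<Rightarrow> ('a list \<Rightarrow> 'a list) \<Rightarrow> bool" where
  "unary_instruction n f \<longleftrightarrow> f \<in> Bij (words n) \<and>
     (\<exists>j<n. \<exists>h::'a \<Rightarrow> 'a. bij h \<and> (\<forall>x\<in>words n. f x = x[j := h (x ! j)]))"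

end

theory Submission
  imports Defs
begin

text \<open>A coordinate j whose value after g depends only on its value before g stays such
  under composition and (as A is finite) under inversion, so these permutations form a
  subgroup of Sym(A^n), and a proper one as soon as |A| \<ge> 2 and n \<ge> 2. A generating set
  therefore contains, for every coordinate, an instruction that changes it; with only n
  instructions, each changing at most one coordinate, every coordinate is changed by
  exactly one of them. If f \<in> X were unary at j, all other instructions would leave
  coordinate j fixed, and X would lie in the proper subgroup attached to j.\<close>

definition coord_factors :: "nat \<Rightarrow> nat \<Rightarrow> ('a list \<Rightarrow> 'a list) \<Rightarrow> bool" where
  "coord_factors n j g \<longleftrightarrow> (\<exists>\<phi>. \<forall>x\<in>words n. g x ! j = \<phi> (x ! j))"

definition coord_factors_perms :: "nat \<Rightarrow> nat \<Rightarrow> ('a list \<Rightarrow> 'a list) set" where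
  "coord_factors_perms n j = {g \<in> Bij (words n). coord_factors n j g}"

definition fixes_coord :: "nat \<Rightarrow> nat \<Rightarrow> ('a list \<Rightarrow> 'a list) \<Rightarrow> bool" where
  "fixes_coord n k g \<longleftrightarrow> (\<forall>x\<in>words n. g x ! k = x ! k)"

definition moved_coords :: "nat \<Rightarrow> ('a list \<Rightarrow> 'a list) \<Rightarrow> nat set" where
  "moved_coords n g = {k. k < n \<and> \<not> fixes_coord n k g}"

lemma carrier_BijGroup: "carrier (BijGroup S) = Bij S"
  by (simp add: BijGroup_def)

lemma fixes_coord_imp_coord_factors: "fixes_coord n k g \<Longrightarrow> coord_factors n k g"
  unfolding fixes_coord_def coord_factors_def by (rule exI[of _ id]) simp

lemma coord_factors_compose:
  assumes "h \<in> Bij (words n)" "coord_factors n j g" "coord_factors n j h"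
  shows "coord_factors n j (compose (words n) g h)"
proof -
  obtain \<phi> \<psi> where \<phi>: "\<forall>x\<in>words n. g x ! j = \<phi> (x ! j)"
    and \<psi>: "\<forall>x\<in>words n. h x ! j = \<psi> (x ! j)"
    using assms(2,3) unfolding coord_factors_def by blast
  have "\<forall>x\<in>words n. compose (words n) g h x ! j = (\<phi> \<circ> \<psi>) (x ! j)"
    using \<phi> \<psi> Bij_imp_funcset[OF assms(1)] by (auto simp: compose_def Pi_def)
  then show ?thesis unfolding coord_factors_def by blast
qed

text \<open>The factor \<phi> of a bijection is onto A (evaluate at constant words), hence injective
  because A is finite; the inverse then factors through the inverse of \<phi>.\<close>
lemma coord_factors_inv:
  fixes g :: "'a::finite list \<Rightarrow> 'a list"
  assumes g: "g \<in> Bij (words n)" and "j < n" and "coord_factors n j g"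
  shows "coord_factors n j (inv\<^bsub>BijGroup (words n)\<^esub> g)"
proof -
  obtain \<phi> where \<phi>: "\<forall>x\<in>words n. g x ! j = \<phi> (x ! j)"
    using assms(3) unfolding coord_factors_def by blast
  have bij: "bij_betw g (words n) (words n)" using g by (simp add: Bij_def)
  have preimage: "g (inv_into (words n) g y) = y" "inv_into (words n) g y \<in> words n"
    if "y \<in> words n" for y
    using that bij g by (simp_all add: bij_betw_inv_into_right Bij_inv_into_mem)
  have "a \<in> range \<phi>" for a
  proof -
    have y: "replicate n a \<in> words n" by (simp add: words_def)
    have "a = replicate n a ! j" using \<open>j < n\<close> by simp
    also have "\<dots> = \<phi> (inv_into (words n) g (replicate n a) ! j)"
      using \<phi> preimage[OF y] by metis
    finally show "a \<in> range \<phi>" by blast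
  qed
  then have "surj \<phi>" by blast
  then have "inj \<phi>" by (simp add: finite_UNIV_surj_inj)
  have "(inv\<^bsub>BijGroup (words n)\<^esub> g) y ! j = inv_into UNIV \<phi> (y ! j)" if y: "y \<in> words n" for y
  proof -
    have "\<phi> (inv_into (words n) g y ! j) = y ! j"
      using \<phi> preimage[OF y] by metis
    then have "inv_into UNIV \<phi> (y ! j) = inv_into (words n) g y ! j"
      using \<open>inj \<phi>\<close> by (metis inv_f_f)
    then show ?thesis using y g by (simp add: inv_BijGroup)
  qed
  then show ?thesis unfolding coord_factors_def by blast
qed

lemma subgroup_coord_factors_perms:
  assumes "j < n"
  shows "subgroup (coord_factors_perms n j :: ('a::finite list \<Rightarrow> 'a list) set)
           (BijGroup (words n))"
proof (rule group.subgroupI[OF group_BijGroup])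
  show "coord_factors_perms n j \<subseteq> carrier (BijGroup (words n))"
    by (auto simp: coord_factors_perms_def carrier_BijGroup)
  have "fixes_coord n j (\<one>\<^bsub>BijGroup (words n)\<^esub>)"
    by (simp add: fixes_coord_def BijGroup_def)
  then show "coord_factors_perms n j \<noteq> {}"
    unfolding coord_factors_perms_def
    using id_Bij fixes_coord_imp_coord_factors by (fastforce simp: BijGroup_def)
next
  fix g h :: "'a list \<Rightarrow> 'a list"
  assume "g \<in> coord_factors_perms n j" "h \<in> coord_factors_perms n j"
  then show "g \<otimes>\<^bsub>BijGroup (words n)\<^esub> h \<in> coord_factors_perms n j"
    by (auto simp: coord_factors_perms_def BijGroup_def compose_Bij coord_factors_compose)
next
  fix g :: "'a list \<Rightarrow> 'a list"
  assume "g \<in> coord_factors_perms n j"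
  then show "inv\<^bsub>BijGroup (words n)\<^esub> g \<in> coord_factors_perms n j"
    using assms coord_factors_inv group.inv_closed[OF group_BijGroup]
    by (fastforce simp: coord_factors_perms_def carrier_BijGroup)
qed

text \<open>Swapping the constant words a\<dots>a and b\<dots>b while fixing a\<dots>aba\<dots>a (b at a position
  k \<noteq> j) sends the value a at coordinate j both to b and to a.\<close>
lemma coord_factors_perms_proper:
  assumes "card (UNIV :: 'a::finite set) \<ge> 2" "n \<ge> 2" "j < n"
  shows "\<exists>\<sigma>\<in>Bij (words n). (\<sigma> :: 'a list \<Rightarrow> 'a list) \<notin> coord_factors_perms n j"
proof -
  have "\<not> card (UNIV :: 'a set) \<le> Suc 0" using assms(1) by simp
  then obtain a b :: 'a where "a \<noteq> b" by (auto simp: card_le_Suc0_iff_eq)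
  define k where "k = (if j = 0 then 1 else 0 :: nat)"
  have k: "k < n" "k \<noteq> j" using assms unfolding k_def by auto
  define u where "u = replicate n a"
  define v where "v = replicate n b"
  define w where "w = (replicate n a)[k := b]"
  have words: "u \<in> words n" "v \<in> words n" "w \<in> words n"
    unfolding u_def v_def w_def words_def by auto
  have coords: "u ! j = a" "v ! j = b" "w ! j = a" "w ! k = b" "u ! k = a"
    using k assms(3) unfolding u_def v_def w_def by auto
  have distinct: "u \<noteq> v" "w \<noteq> u" "w \<noteq> v"
    using \<open>a \<noteq> b\<close> by (metis coords(1,2), metis coords(4,5), metis coords(2,3))
  define \<sigma> where "\<sigma> = (\<lambda>x\<in>words n. if x = u then v else if x = v then u else x)"
  have "bij_betw \<sigma> (words n) (words n)"
    by (rule bij_betwI[of _ _ _ \<sigma>]) (use words distinct in \<open>auto simp: \<sigma>_def\<close>)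
  then have "\<sigma> \<in> Bij (words n)" unfolding Bij_def \<sigma>_def by auto
  moreover have "\<not> coord_factors n j \<sigma>"
  proof
    assume "coord_factors n j \<sigma>"
    then obtain \<phi> where \<phi>: "\<forall>x\<in>words n. \<sigma> x ! j = \<phi> (x ! j)"
      unfolding coord_factors_def by blast
    have "\<sigma> u = v" "\<sigma> w = w" using words distinct unfolding \<sigma>_def by auto
    then have "b = \<phi> a" "a = \<phi> a" using \<phi> words coords by metis+
    then show False using \<open>a \<noteq> b\<close> by simp
  qed
  ultimately show ?thesis unfolding coord_factors_perms_def by blast
qed

lemma generating_set_not_subset_coord_factors_perms:
  fixes I :: "('a::finite list \<Rightarrow> 'a list) set"
  assumes "card (UNIV :: 'a set) \<ge> 2" "n \<ge> 2" "j < n"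
    and "generate (BijGroup (words n)) I = carrier (BijGroup (words n))"
  shows "\<not> I \<subseteq> coord_factors_perms n j"
proof
  assume "I \<subseteq> coord_factors_perms n j"
  then have "generate (BijGroup (words n)) I \<subseteq> coord_factors_perms n j"
    by (rule group.generate_subgroup_incl[OF group_BijGroup _ subgroup_coord_factors_perms[OF assms(3)]])
  then have "Bij (words n) \<subseteq> (coord_factors_perms n j :: ('a list \<Rightarrow> 'a list) set)"
    unfolding assms(4) carrier_BijGroup .
  then show False using coord_factors_perms_proper[OF assms(1-3)] by blast
qed

lemma generating_set_moves_coord:
  fixes I :: "('a::finite list \<Rightarrow> 'a list) set"
  assumes "card (UNIV :: 'a set) \<ge> 2" "n \<ge> 2" "k < n" "I \<subseteq> Bij (words n)"
    and "generate (BijGroup (words n)) I = carrier (BijGroup (words n))"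
  shows "\<exists>g\<in>I. k \<in> moved_coords n g"
proof (rule ccontr)
  assume "\<not> ?thesis"
  then have "I \<subseteq> coord_factors_perms n k"
    using assms(3,4) fixes_coord_imp_coord_factors
    by (fastforce simp: moved_coords_def coord_factors_perms_def)
  then show False
    using generating_set_not_subset_coord_factors_perms[OF assms(1-3,5)] by blast
qed

lemma card_moved_coords_instruction:
  assumes "instruction n g"
  shows "card (moved_coords n g) \<le> 1"
proof -
  obtain c where "\<forall>i<n. i \<noteq> c \<longrightarrow> (\<forall>x\<in>words n. g x ! i = x ! i)"
    using assms unfolding instruction_def by blast
  then have "moved_coords n g \<subseteq> {c}"
    unfolding moved_coords_def fixes_coord_def by auto
  then show ?thesis using card_mono[of "{c}"] by simp
qed

lemma unary_instructionE:
  assumes "unary_instruction n f"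
  obtains j where "j < n" "moved_coords n f \<subseteq> {j}" "coord_factors n j f"
proof -
  obtain j h where "j < n" and f: "\<forall>x\<in>words n. f x = x[j := h (x ! j)]"
    using assms unfolding unary_instruction_def by blast
  moreover have "moved_coords n f \<subseteq> {j}"
    using f by (auto simp: moved_coords_def fixes_coord_def) (metis nth_list_update_neq)
  moreover have "coord_factors n j f"
    unfolding coord_factors_def using f \<open>j < n\<close> by (auto simp: words_def)
  ultimately show ?thesis using that by blast
qed

lemma tight_cover_subset_eq:
  fixes M :: "'b \<Rightarrow> 'c set"
  assumes "finite I" "card I \<le> card K" "K \<subseteq> (\<Union>g\<in>I. M g)"
    and "\<forall>g\<in>I. finite (M g) \<and> card (M g) \<le> 1"
    and "f \<in> I" "g \<in> I" "M f \<subseteq> M g"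
  shows "f = g"
proof (rule ccontr)
  assume "f \<noteq> g"
  then have "K \<subseteq> (\<Union>h\<in>I - {f}. M h)" using assms(3,6,7) by blast
  then have "card K \<le> card (\<Union>h\<in>I - {f}. M h)"
    using assms(1,4) by (intro card_mono) auto
  also have "\<dots> \<le> (\<Sum>h\<in>I - {f}. card (M h))"
    using assms(1) by (intro card_UN_le) auto
  also have "\<dots> \<le> (\<Sum>h\<in>I - {f}. 1)"
    using assms(4) by (intro sum_mono) auto
  also have "\<dots> < card I" using card_Diff1_less[OF assms(1,5)] by simp
  finally show False using assms(2) by simp
qed

theorem lemma6:
  fixes I :: "('a::finite list \<Rightarrow> 'a list) set" and n :: nat
  assumes "card (UNIV :: 'a set) \<ge> 2" and "n \<ge> 2"
    and "I \<subseteq> Bij (words n)"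
    and "card I = n"
    and "\<forall>f\<in>I. instruction n f"
    and "generate (BijGroup (words n)) I = carrier (BijGroup (words n))"
  shows "\<forall>f\<in>I. \<not> unary_instruction n f"
proof (intro ballI notI)
  fix f assume "f \<in> I" and unary: "unary_instruction n f"
  obtain j where j: "j < n" "moved_coords n f \<subseteq> {j}" "coord_factors n j f"
    by (rule unary_instructionE[OF unary])
  have "finite I" using assms(2,4) card.infinite by force
  have cover: "{..<n} \<subseteq> (\<Union>g\<in>I. moved_coords n g)"
    using generating_set_moves_coord[OF assms(1,2) _ assms(3,6)] by blast
  have "finite (moved_coords n g)" for g :: "'a list \<Rightarrow> 'a list"
    by (simp add: moved_coords_def)
  then have small: "\<forall>g\<in>I. finite (moved_coords n g) \<and> card (moved_coords n g) \<le> 1"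
    using assms(5) card_moved_coords_instruction by blast
  have "f = g" if "g \<in> I" "j \<in> moved_coords n g" for g
  proof (rule tight_cover_subset_eq[OF \<open>finite I\<close> _ cover small \<open>f \<in> I\<close> that(1)])
    show "moved_coords n f \<subseteq> moved_coords n g" using j(2) that(2) by blast
  qed (use assms(4) in simp_all)
  then have "I \<subseteq> coord_factors_perms n j"
    using j assms(3) fixes_coord_imp_coord_factors
    by (fastforce simp: coord_factors_perms_def moved_coords_def)
  then show False
    using generating_set_not_subset_coord_factors_perms[OF assms(1,2) j(1) assms(6)] by blast
qed

end
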